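(* Let $\pi$ be a supercuspidal representation of $G$ with trivial central character and $a(\pi)=4n$, $n\ge1$, let $T=T_\alpha$ be an inert torus in canonical form, and let $W_0\in\mathcal W(\pi,\psi)$ be a minimal vector for $T$ in the Whittaker model of $\pi$. Put $\mathfrak a=-a_{\theta_\pi,T}\alpha\in\mathfrak o^\times$. Then there is a constant $c\in\mathbb{C}$ such that for all $y\in F^\times$, $W_0(a(y))=c$ if $y\in\varpi^{-2n}\mathfrak aU_n$ and $W_0(a(y))=0$ otherwise.
   Context: $F$ is a non-archimedean local field of characteristic zero with ring of integers $\mathfrak o$, maximal ideal $\mathfrak p$, uniformizer $\varpi$, odd residue cardinality; $U_m=\{x\in\mathfrak o^\times:v(x-1)\ge m\}$; $E$ the unramified quadratic extension; $G=\mathrm{GL}_2(F)$, $Z$ its centre, $a(y)=\mathrm{diag}(y,1)$, $n(x)=\begin{pmatrix}1&x\\0&1\end{pmatrix}$. $\psi$ is an additive character of $F$ trivial on $\mathfrak o$ but not $\varpi^{-1}\mathfrak o$, $\psi_E=\psi\circ\mathrm{Tr}_{E/F}$. $\mathcal W(\pi,\psi)$ is the Whittaker model: the unique space of functions $W$ on $G$ with $W(n(x)g)=\psi(x)W(g)$, stable under right translation, realizing $\pi$. $a(\pi)$ is the least $r\ge0$ such that $\pi$ has a nonzero vector fixed by $\mathrm{GL}_2(\mathfrak o)\cap\begin{pmatrix}1+\mathfrak p^r&\mathfrak o\\\mathfrak p^r&\mathfrak o\end{pmatrix}$; for a character $\chi$ of $E^\times$, $a(\chi)$ is the least $m\ge0$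 with $\chi$ trivial on $\{x\in\mathfrak o_E^\times:v(x-1)\ge m\}$. Inert torus in canonical form: $T=T_\alpha=\{\begin{pmatrix}x&y\\-\alpha y&x\end{pmatrix}\ne0\}$, $\alpha\in\mathfrak o^\times$, $-\alpha$ non-square, identified with $E^\times$ via $x+y\sqrt{-\alpha}\mapsto\begin{pmatrix}x&y\\-\alpha y&x\end{pmatrix}$; $w_\alpha=\begin{pmatrix}0&1\\-\alpha&0\end{pmatrix}$; $K(n)=\{g\in\mathrm{GL}_2(\mathfrak o):g\equiv1\bmod\mathfrak p^n\}$; $K_T(n)=\{\begin{pmatrix}a&b\\c&d\end{pmatrix}\in\mathrm{GL}_2(\mathfrak o):a-d,\ c+b\alpha\in\mathfrak p^n\}$, $ZK_T(n)=TK(n)$. For $\theta$ a character of $E^\times$ with $a(\theta)=2n$, $\theta|_{F^\times}=1$, $a_{\theta,T}\in\mathfrak o^\times$ is a fixed element with $\psi_E(\varpi^{-n}a_{\theta,T}\sqrt{-\alpha}u)=\theta(1+\varpi^nu)$ for $u\in\mathfrak o_E$, and $\chi_{\theta,T}(t(1+\varpi^ng))=\theta(t)\psi(\varpi^{-n}a_{\theta,T}\mathrm{Tr}(w_\alpha g))$ is a character of $ZK_T(n)$. There is a character $\theta_\pi$ of $E^\times$ with $a(\theta_\pi)=2n$, $\theta_\pi|_{F^\times}=1$ and $\pi\simeq c\text{-}\mathrm{Ind}_{ZK_T(n)}^G\chi_{\theta_\pi,T}$ for all such $T$; fix it. A minimal vector for $T$ is a nonzero $v\in\pi$ with $\pi(k)v=\chi_{\theta_\pi,T}(k)v$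 for all $k\in ZK_T(n)$. *)

theory Defs
  imports Complex_Main
begin

type_synonym 'a m2 = "'a \<times> 'a \<times> 'a \<times> 'a"  (* (a,b,c,d) = [[a,b],[c,d]] *)

definition m2mult :: "'a::comm_ring_1 m2 \<Rightarrow> 'a m2 \<Rightarrow> 'a m2" where
  "m2mult = (\<lambda>(a,b,c,d) (a',b',c',d').
      (a*a' + b*c', a*b' + b*d', c*a' + d*c', c*b' + d*d'))"

definition m2add :: "'a::comm_ring_1 m2 \<Rightarrow> 'a m2 \<Rightarrow> 'a m2" where
  "m2add = (\<lambda>(a,b,c,d) (a',b',c',d'). (a+a', b+b', c+c', d+d'))"

definition m2smul :: "'a::comm_ring_1 \<Rightarrow> 'a m2 \<Rightarrow> 'a m2" where
  "m2smul s = (\<lambda>(a,b,c,d). (s*a, s*b, s*c, s*d))"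

definition m2one :: "'a::comm_ring_1 m2" where "m2one = (1,0,0,1)"

definition m2det :: "'a::comm_ring_1 m2 \<Rightarrow> 'a" where
  "m2det = (\<lambda>(a,b,c,d). a*d - b*c)"

definition m2trace :: "'a::comm_ring_1 m2 \<Rightarrow> 'a" where
  "m2trace = (\<lambda>(a,b,c,d). a + d)"

definition GL2 :: "'a::field m2 set" where "GL2 = {g. m2det g \<noteq> 0}"

definition nmat :: "'a::comm_ring_1 \<Rightarrow> 'a m2" where "nmat x = (1,x,0,1)"
definition amat :: "'a::comm_ring_1 \<Rightarrow> 'a m2" where "amat y = (y,0,0,1)"
definition scal :: "'a::comm_ring_1 \<Rightarrow> 'a m2" where "scal z = (z,0,0,z)"

definition rtrans :: "'a::comm_ring_1 m2 \<Rightarrow> ('a m2 \<Rightarrow> complex) \<Rightarrow> ('a m2 \<Rightarrow> complex)" where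
  "rtrans g f = (\<lambda>h. f (m2mult h g))"

text \<open>The valuation v is only meaningful on nonzero elements; vge v x k means x in p^k.\<close>
definition vge :: "('a::field \<Rightarrow> int) \<Rightarrow> 'a \<Rightarrow> int \<Rightarrow> bool" where
  "vge v x k \<longleftrightarrow> x = 0 \<or> k \<le> v x"

definition ounit :: "('a::field \<Rightarrow> int) \<Rightarrow> 'a \<Rightarrow> bool" where
  "ounit v x \<longleftrightarrow> x \<noteq> 0 \<and> v x = 0"

definition residue_reps :: "('a::field \<Rightarrow> int) \<Rightarrow> 'a set \<Rightarrow> bool" where
  "residue_reps v R \<longleftrightarrow> R \<subseteq> {x. vge v x 0} \<and>
      (\<forall>x. vge v x 0 \<longrightarrow> (\<exists>!r. r \<in> R \<and> vge v (x - r) 1))"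

text \<open>Non-archimedean local field of characteristic zero (char 0 is the type class),
  with odd residue cardinality: a complete discretely valued field with finite residue field.\<close>
definition nonarch_local_field_odd :: "('a::field_char_0 \<Rightarrow> int) \<Rightarrow> bool" where
  "nonarch_local_field_odd v \<longleftrightarrow>
     (\<forall>x y. x \<noteq> 0 \<longrightarrow> y \<noteq> 0 \<longrightarrow> v (x*y) = v x + v y) \<and>
     (\<forall>x y. x \<noteq> 0 \<longrightarrow> y \<noteq> 0 \<longrightarrow> x + y \<noteq> 0 \<longrightarrow> min (v x) (v y) \<le> v (x + y)) \<and>
     (\<exists>p. p \<noteq> 0 \<and> v p = 1) \<and>
     (\<forall>X::nat \<Rightarrow> 'a. (\<forall>k. \<exists>N. \<forall>m\<ge>N. \<forall>n\<ge>N. vge v (X m - X n) k) \<longrightarrow>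
          (\<exists>L. \<forall>k. \<exists>N. \<forall>n\<ge>N. vge v (X n - L) k)) \<and>
     (\<exists>R. finite R \<and> residue_reps v R \<and> odd (card R))"

definition Uset :: "('a::field \<Rightarrow> int) \<Rightarrow> nat \<Rightarrow> 'a set" where
  "Uset v m = {x. ounit v x \<and> vge v (x - 1) (int m)}"

definition level0_add_char :: "('a::field \<Rightarrow> int) \<Rightarrow> ('a \<Rightarrow> complex) \<Rightarrow> bool" where
  "level0_add_char v \<psi> \<longleftrightarrow> (\<forall>x y. \<psi> (x + y) = \<psi> x * \<psi> y) \<and> (\<forall>x. cmod (\<psi> x) = 1) \<and>
     (\<forall>x. vge v x 0 \<longrightarrow> \<psi> x = 1) \<and> (\<exists>x. vge v x (-1) \<and> \<psi> x \<noteq> 1)"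

section \<open>The unramified quadratic extension E = F(sqrt(-alpha)), elements (x,y) = x + y sqrt(-alpha)\<close>

definition emul :: "'a::field \<Rightarrow> 'a \<times> 'a \<Rightarrow> 'a \<times> 'a \<Rightarrow> 'a \<times> 'a" where
  "emul \<alpha> = (\<lambda>(x,y) (x',y'). (x*x' - \<alpha>*y*y', x*y' + y*x'))"

definition eadd :: "'a::field \<times> 'a \<Rightarrow> 'a \<times> 'a \<Rightarrow> 'a \<times> 'a" where
  "eadd = (\<lambda>(x,y) (x',y'). (x+x', y+y'))"

definition escal :: "'a::field \<Rightarrow> 'a \<times> 'a \<Rightarrow> 'a \<times> 'a" where
  "escal c = (\<lambda>(x,y). (c*x, c*y))"

definition eone :: "'a::field \<times> 'a" where "eone = (1, 0)"
definition esqrt :: "'a::field \<times> 'a" where "esqrt = (0, 1)"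

definition eTr :: "'a::field \<times> 'a \<Rightarrow> 'a" where "eTr = (\<lambda>(x,y). 2*x)"

text \<open>E-valuation: v_E(x + y sqrt(-alpha)) = min(v x, v y) since E/F is unramified.\<close>
definition E_vge :: "('a::field \<Rightarrow> int) \<Rightarrow> 'a \<times> 'a \<Rightarrow> int \<Rightarrow> bool" where
  "E_vge v z k \<longleftrightarrow> vge v (fst z) k \<and> vge v (snd z) k"

definition E_units_level :: "('a::field \<Rightarrow> int) \<Rightarrow> nat \<Rightarrow> ('a \<times> 'a) set" where
  "E_units_level v m = (if m = 0 then {z. E_vge v z 0 \<and> \<not> E_vge v z 1}
                        else {z. E_vge v (fst z - 1, snd z) (int m)})"

definition E_char :: "('a::field \<Rightarrow> int) \<Rightarrow> 'a \<Rightarrow> ('a \<times> 'a \<Rightarrow> complex) \<Rightarrow> bool" where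
  "E_char v \<alpha> \<theta> \<longleftrightarrow>
     (\<forall>z w. z \<noteq> (0,0) \<longrightarrow> w \<noteq> (0,0) \<longrightarrow> \<theta> (emul \<alpha> z w) = \<theta> z * \<theta> w) \<and>
     (\<forall>z. z \<noteq> (0,0) \<longrightarrow> \<theta> z \<noteq> 0) \<and>
     (\<exists>m. \<forall>z \<in> E_units_level v m. \<theta> z = 1)"

definition E_conductor :: "('a::field \<Rightarrow> int) \<Rightarrow> ('a \<times> 'a \<Rightarrow> complex) \<Rightarrow> nat" where
  "E_conductor v \<theta> = (LEAST m. \<forall>z \<in> E_units_level v m. \<theta> z = 1)"

text \<open>a_{theta,T}: a unit with psi_E(pi^-n a sqrt(-alpha) u) = theta(1 + pi^n u) for u in o_E.\<close>
definition is_a_theta :: "('a::field \<Rightarrow> int) \<Rightarrow> 'a \<Rightarrow> ('a \<Rightarrow> complex) \<Rightarrow> 'a \<Rightarrow> nat \<Rightarrow>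
      ('a \<times> 'a \<Rightarrow> complex) \<Rightarrow> 'a \<Rightarrow> bool" where
  "is_a_theta v \<alpha> \<psi> \<pi> n \<theta> a \<longleftrightarrow> ounit v a \<and>
     (\<forall>u. E_vge v u 0 \<longrightarrow>
        \<psi> (eTr (escal (inverse (\<pi>^n) * a) (emul \<alpha> esqrt u))) = \<theta> (eadd eone (escal (\<pi>^n) u)))"

definition M2o :: "('a::field \<Rightarrow> int) \<Rightarrow> 'a m2 set" where
  "M2o v = {(a,b,c,d). vge v a 0 \<and> vge v b 0 \<and> vge v c 0 \<and> vge v d 0}"

definition GL2o :: "('a::field \<Rightarrow> int) \<Rightarrow> 'a m2 set" where
  "GL2o v = {g \<in> M2o v. ounit v (m2det g)}"

definition Kn :: "('a::field \<Rightarrow> int) \<Rightarrow> nat \<Rightarrow> 'a m2 set" where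
  "Kn v m = {(a,b,c,d) \<in> GL2o v. vge v (a - 1) (int m) \<and> vge v b (int m) \<and>
                                 vge v c (int m) \<and> vge v (d - 1) (int m)}"

definition K1 :: "('a::field \<Rightarrow> int) \<Rightarrow> nat \<Rightarrow> 'a m2 set" where
  "K1 v r = {(a,b,c,d) \<in> GL2o v. vge v (a - 1) (int r) \<and> vge v c (int r)}"

text \<open>Inert torus T_alpha in canonical form and the embedding E^x -> T_alpha.\<close>
definition tmat :: "'a::field \<Rightarrow> 'a \<times> 'a \<Rightarrow> 'a m2" where
  "tmat \<alpha> = (\<lambda>(x,y). (x, y, -\<alpha>*y, x))"

definition torus :: "'a::field \<Rightarrow> 'a m2 set" where
  "torus \<alpha> = {tmat \<alpha> z | z. z \<noteq> (0,0)}"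

definition walpha :: "'a::field \<Rightarrow> 'a m2" where "walpha \<alpha> = (0, 1, -\<alpha>, 0)"

text \<open>Z K_T(n) = T K(n).\<close>
definition ZKT :: "('a::field \<Rightarrow> int) \<Rightarrow> 'a \<Rightarrow> nat \<Rightarrow> 'a m2 set" where
  "ZKT v \<alpha> n = {m2mult t k | t k. t \<in> torus \<alpha> \<and> k \<in> Kn v n}"

definition chiT :: "('a::field \<Rightarrow> int) \<Rightarrow> 'a \<Rightarrow> ('a \<Rightarrow> complex) \<Rightarrow> 'a \<Rightarrow> nat \<Rightarrow>
      ('a \<times> 'a \<Rightarrow> complex) \<Rightarrow> 'a \<Rightarrow> 'a m2 \<Rightarrow> complex" where
  "chiT v \<alpha> \<psi> \<pi> n \<theta> a k = (SOME c. \<exists>z g. z \<noteq> (0,0) \<and> g \<in> M2o v \<and>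
       k = m2mult (tmat \<alpha> z) (m2add m2one (m2smul (\<pi>^n) g)) \<and>
       c = \<theta> z * \<psi> (inverse (\<pi>^n) * a * m2trace (m2mult (walpha \<alpha>) g)))"

section \<open>Representations realised on spaces of functions on GL2, right translation\<close>

definition G_space :: "('a::field m2 \<Rightarrow> complex) set \<Rightarrow> bool" where
  "G_space V \<longleftrightarrow> (\<lambda>_. 0) \<in> V \<and>
     (\<forall>f\<in>V. \<forall>f'\<in>V. (\<lambda>h. f h + f' h) \<in> V) \<and>
     (\<forall>c. \<forall>f\<in>V. (\<lambda>h. c * f h) \<in> V) \<and>
     (\<forall>g\<in>GL2. \<forall>f\<in>V. rtrans g f \<in> V)"

definition rep_iso :: "('a::field m2 \<Rightarrow> complex) set \<Rightarrow> ('a m2 \<Rightarrow> complex) set \<Rightarrow> bool" where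
  "rep_iso A B \<longleftrightarrow> (\<exists>\<Phi>. bij_betw \<Phi> A B \<and>
     (\<forall>f\<in>A. \<forall>f'\<in>A. \<Phi> (\<lambda>h. f h + f' h) = (\<lambda>h. \<Phi> f h + \<Phi> f' h)) \<and>
     (\<forall>c. \<forall>f\<in>A. \<Phi> (\<lambda>h. c * f h) = (\<lambda>h. c * \<Phi> f h)) \<and>
     (\<forall>g\<in>GL2. \<forall>f\<in>A. \<Phi> (rtrans g f) = rtrans g (\<Phi> f)))"

text \<open>Compact induction c-Ind_H^G chi (functions vanishing off G).\<close>
definition cInd :: "'a::field m2 set \<Rightarrow> ('a m2 \<Rightarrow> complex) \<Rightarrow> ('a m2 \<Rightarrow> complex) set" where
  "cInd H \<chi> = {f. (\<forall>g. g \<notin> GL2 \<longrightarrow> f g = 0) \<and>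
      (\<forall>h\<in>H. \<forall>g\<in>GL2. f (m2mult h g) = \<chi> h * f g) \<and>
      (\<exists>S. finite S \<and> S \<subseteq> GL2 \<and>
         (\<forall>g\<in>GL2. f g \<noteq> 0 \<longrightarrow> (\<exists>h\<in>H. \<exists>s\<in>S. g = m2mult h s)))}"

definition whittaker_space :: "('a::field \<Rightarrow> complex) \<Rightarrow> ('a m2 \<Rightarrow> complex) set \<Rightarrow> bool" where
  "whittaker_space \<psi> V \<longleftrightarrow> G_space V \<and>
     (\<forall>W\<in>V. \<forall>g. g \<notin> GL2 \<longrightarrow> W g = 0) \<and>
     (\<forall>W\<in>V. \<forall>x g. W (m2mult (nmat x) g) = \<psi> x * W g)"

definition irreducible_rep :: "('a::field m2 \<Rightarrow> complex) set \<Rightarrow> bool" where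
  "irreducible_rep V \<longleftrightarrow> V \<noteq> {\<lambda>_. 0} \<and>
     (\<forall>U. U \<subseteq> V \<longrightarrow> G_space U \<longrightarrow> U = {\<lambda>_. 0} \<or> U = V)"

definition smooth_rep :: "('a::field \<Rightarrow> int) \<Rightarrow> ('a m2 \<Rightarrow> complex) set \<Rightarrow> bool" where
  "smooth_rep v V \<longleftrightarrow> (\<forall>W\<in>V. \<exists>m. \<forall>k\<in>Kn v m. rtrans k W = W)"

definition fin_dim :: "('b \<Rightarrow> complex) set \<Rightarrow> bool" where
  "fin_dim S \<longleftrightarrow> (\<exists>B. finite B \<and> B \<subseteq> S \<and> (\<forall>f\<in>S. \<exists>c. f = (\<lambda>h. \<Sum>b\<in>B. c b * b h)))"

definition admissible_rep :: "('a::field \<Rightarrow> int) \<Rightarrow> ('a m2 \<Rightarrow> complex) set \<Rightarrow> bool" where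
  "admissible_rep v V \<longleftrightarrow> (\<forall>m. fin_dim {W\<in>V. \<forall>k\<in>Kn v m. rtrans k W = W})"

text \<open>Supercuspidal: irreducible smooth admissible with vanishing Jacquet module
  (Jacquet's criterion: every vector integrates to zero over some compact open subgroup of N).\<close>
definition supercuspidal :: "('a::field \<Rightarrow> int) \<Rightarrow> ('a m2 \<Rightarrow> complex) set \<Rightarrow> bool" where
  "supercuspidal v V \<longleftrightarrow> irreducible_rep V \<and> smooth_rep v V \<and> admissible_rep v V \<and>
     (\<forall>W\<in>V. \<exists>(l::int) (j::int) R. l \<le> j \<and>
        (\<forall>x. vge v x j \<longrightarrow> rtrans (nmat x) W = W) \<and>
        finite R \<and> (\<forall>r\<in>R. vge v r l) \<and>
        (\<forall>x. vge v x l \<longrightarrow> (\<exists>!r. r \<in> R \<and> vge v (x - r) j)) \<and>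
        (\<forall>g. (\<Sum>r\<in>R. W (m2mult g (nmat r))) = 0))"

definition trivial_central_char :: "('a::field m2 \<Rightarrow> complex) set \<Rightarrow> bool" where
  "trivial_central_char V \<longleftrightarrow> (\<forall>z. z \<noteq> 0 \<longrightarrow> (\<forall>W\<in>V. rtrans (scal z) W = W))"

definition rep_conductor :: "('a::field \<Rightarrow> int) \<Rightarrow> ('a m2 \<Rightarrow> complex) set \<Rightarrow> nat" where
  "rep_conductor v V = (LEAST r. \<exists>W\<in>V. W \<noteq> (\<lambda>_. 0) \<and> (\<forall>k\<in>K1 v r. rtrans k W = W))"

end

theory Submission
  imports Defs
begin

text \<open>
  \<open>W\<^sub>0\<close> is an eigenvector of \<open>K(n) \<subseteq> ZK\<^sub>T(n)\<close> for \<open>\<chi> = \<chi>\<^sub>\<theta>\<^sub>,\<^sub>T\<close>. Put \<open>A = -a \<alpha> \<pi>\<^sup>-\<^sup>2\<^sup>n\<close>.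
  For \<open>x \<in> \<mathfrak>p\<^sup>n\<close> one computes \<open>\<chi>(n(x)) = \<psi>(A x)\<close>, while \<open>a(y) n(x) = n(y x) a(y)\<close> and the
  Whittaker property give \<open>W\<^sub>0(a(y) n(x)) = \<psi>(y x) W\<^sub>0(a(y))\<close>. So if \<open>W\<^sub>0(a(y)) \<noteq> 0\<close>, then
  \<open>\<psi>((y - A) x) = 1\<close> on \<open>\<mathfrak>p\<^sup>n\<close>, and as \<psi> has level 0 this forces \<open>y \<in> A U\<^sub>n\<close>. Since \<open>\<chi>\<close> is
  trivial on \<open>a(u)\<close> for \<open>u \<in> U\<^sub>n\<close>, \<open>W\<^sub>0(a(y))\<close> is constant on \<open>A U\<^sub>n\<close>.

  The value of \<open>\<chi>\<close> on \<open>1 + \<pi>\<^sup>n g\<close> must be shown independent of the factorization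
  \<open>t (1 + \<pi>\<^sup>n g')\<close> used in its definition: such a \<open>t\<close> lies in \<open>1 + \<pi>\<^sup>n \<mathfrak>o\<^sub>E\<close>, and the defining
  property of \<open>a\<close> converts \<open>\<theta>(t)\<close> into exactly the change in \<open>\<psi>(\<pi>\<^sup>-\<^sup>n a Tr(w\<^sub>\<alpha> g))\<close>.
\<close>

lemma amat_mult_nmat: "m2mult (amat y) (nmat x) = m2mult (nmat (y * x)) (amat y)"
  by (simp add: m2mult_def amat_def nmat_def)

lemma amat_mult_amat: "m2mult (amat y) (amat u) = amat (y * u)"
  by (simp add: m2mult_def amat_def)

lemma Kn_subset_ZKT: "Kn v n \<subseteq> ZKT v \<alpha> n"
proof
  fix k
  assume "k \<in> Kn v n"
  moreover have "k = m2mult (tmat \<alpha> (1, 0)) k"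
    by (cases k) (simp add: tmat_def m2mult_def)
  moreover have "tmat \<alpha> (1, 0) \<in> torus \<alpha>"
    unfolding torus_def by (rule CollectI, rule exI[of _ "(1, 0)"]) simp
  ultimately show "k \<in> ZKT v \<alpha> n"
    unfolding ZKT_def by blast
qed

locale nonarch_valuation =
  fixes v :: "'a::field \<Rightarrow> int"
  assumes valuation_mult: "\<And>x y. x \<noteq> 0 \<Longrightarrow> y \<noteq> 0 \<Longrightarrow> v (x * y) = v x + v y"
    and valuation_add: "\<And>x y. x \<noteq> 0 \<Longrightarrow> y \<noteq> 0 \<Longrightarrow> x + y \<noteq> 0 \<Longrightarrow> min (v x) (v y) \<le> v (x + y)"
begin

lemma valuation_one [simp]: "v 1 = 0"
  using valuation_mult[of 1 1] by simp

lemma valuation_minus [simp]: "v (- x) = v x"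
proof (cases "x = 0")
  case False
  have "v ((-1) * (-1)) = v (-1) + v (-1)"
    by (rule valuation_mult) auto
  then have "v (-1) = 0" by simp
  then show ?thesis using valuation_mult[of "-1" x] False by simp
qed simp

lemma valuation_inverse: "x \<noteq> 0 \<Longrightarrow> v (inverse x) = - v x"
  using valuation_mult[of x "inverse x"] by simp

lemma valuation_power: "x \<noteq> 0 \<Longrightarrow> v (x ^ n) = int n * v x"
  by (induction n) (auto simp: valuation_mult algebra_simps)

lemma vge_0 [simp]: "vge v 0 k"
  by (simp add: vge_def)

lemma vge_1: "vge v 1 0"
  by (simp add: vge_def)

lemma vge_add: "vge v x k \<Longrightarrow> vge v y k \<Longrightarrow> vge v (x + y) k"
  unfolding vge_def using valuation_add[of x y] by (cases "x = 0"; cases "y = 0"; cases "x + y = 0") auto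

lemma vge_uminus: "vge v x k \<Longrightarrow> vge v (- x) k"
  by (simp add: vge_def)

lemma vge_diff: "vge v x k \<Longrightarrow> vge v y k \<Longrightarrow> vge v (x - y) k"
  using vge_add[of x k "- y"] by (simp add: vge_uminus)

lemma vge_mult: "vge v x k \<Longrightarrow> vge v y l \<Longrightarrow> vge v (x * y) (k + l)"
  unfolding vge_def using valuation_mult[of x y] by (cases "x = 0"; cases "y = 0") auto

lemma vge_mult_integral: "vge v x k \<Longrightarrow> vge v y 0 \<Longrightarrow> vge v (x * y) k"
  using vge_mult[of x k y 0] by simp

lemma vge_mono: "vge v x k \<Longrightarrow> l \<le> k \<Longrightarrow> vge v x l"
  unfolding vge_def by auto

lemma vge_mult_inverse:
  assumes "c \<noteq> 0" "vge v x (k + v c)"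
  shows "vge v (x * inverse c) k"
  using vge_mult[OF assms(2), of "inverse c" "- v c"] assms(1) by (simp add: vge_def valuation_inverse)

lemma ounit_if_vge_diff_one:
  assumes "vge v (x - 1) 1"
  shows "ounit v x"
proof (cases "x = 1")
  case False
  have "x \<noteq> 0"
    using assms by (auto simp: vge_def)
  moreover have "1 \<le> v (x - 1)"
    using assms False by (simp add: vge_def)
  moreover have "min 0 (v (x - 1)) \<le> v x"
    using valuation_add[of 1 "x - 1"] False \<open>x \<noteq> 0\<close> by simp
  moreover have "min (v x) (v (x - 1)) \<le> 0"
    using valuation_add[of x "- (x - 1)"] valuation_minus[of "x - 1"] False \<open>x \<noteq> 0\<close> by simp
  ultimately show ?thesis
    by (simp add: ounit_def)
qed (simp add: ounit_def)

lemma vge_inverse_ounit: "ounit v x \<Longrightarrow> vge v (inverse x) 0"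
  by (simp add: ounit_def vge_def valuation_inverse)

lemma level0_add_char_nonzero: "level0_add_char v \<psi> \<Longrightarrow> \<psi> x \<noteq> 0"
  unfolding level0_add_char_def by (metis norm_zero zero_neq_one)

lemma level0_add_char_annihilator:
  assumes \<psi>: "level0_add_char v \<psi>" and triv: "\<And>x. vge v x m \<Longrightarrow> \<psi> (b * x) = 1"
  shows "vge v b (- m)"
proof (rule ccontr)
  assume "\<not> vge v b (- m)"
  then have b: "b \<noteq> 0" "v b < - m"
    by (auto simp: vge_def)
  obtain w where w: "vge v w (-1)" "\<psi> w \<noteq> 1"
    using \<psi> by (auto simp: level0_add_char_def)
  then have "w \<noteq> 0"
    using \<psi> by (auto simp: level0_add_char_def)
  then have "vge v (w * inverse b) m"
    using w b by (simp add: vge_def valuation_mult valuation_inverse)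
  then have "\<psi> (b * (w * inverse b)) = 1"
    by (rule triv)
  with w b show False
    by (simp add: field_simps)
qed

lemma mem_scaled_Uset:
  assumes "A \<noteq> 0" "1 \<le> m" "vge v (y - A) (int m + v A)"
  shows "y \<in> (\<lambda>u. A * u) ` Uset v m"
proof
  have "y * inverse A - 1 = (y - A) * inverse A"
    using assms(1) by (simp add: field_simps)
  then have "vge v (y * inverse A - 1) (int m)"
    using vge_mult_inverse[OF assms(1,3)] by simp
  moreover have "ounit v (y * inverse A)"
    using ounit_if_vge_diff_one vge_mono[OF calculation] assms(2) by simp
  ultimately show "y * inverse A \<in> Uset v m"
    by (simp add: Uset_def)
qed (use assms(1) in simp)

lemma ounit_det_one_plus_smul:
  assumes e: "vge v e 1" and g: "g \<in> M2o v"
  shows "ounit v (m2det (m2add m2one (m2smul e g)))"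
proof -
  obtain g11 g12 g21 g22 where g_def: "g = (g11, g12, g21, g22)"
    by (cases g) auto
  have integral: "vge v g11 0" "vge v g12 0" "vge v g21 0" "vge v g22 0"
    using g by (auto simp: g_def M2o_def)
  have "m2det (m2add m2one (m2smul e g)) - 1 = e * (g11 + g22 + e * (g11 * g22 - g12 * g21))"
    by (simp add: g_def m2det_def m2add_def m2one_def m2smul_def algebra_simps)
  moreover have "vge v (e * (g11 + g22 + e * (g11 * g22 - g12 * g21))) 1"
    using e integral vge_mono[OF e, of 0]
    by (intro vge_mult_integral vge_add vge_diff) (auto intro: vge_mult_integral)
  ultimately show ?thesis
    by (metis ounit_if_vge_diff_one)
qed

lemma torus_factor_near_one:
  assumes e: "e \<noteq> 0" "vge v e 1" and g: "g \<in> M2o v" and p: "p \<in> M2o v"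
    and eq: "m2mult (tmat \<alpha> z) (m2add m2one (m2smul e g)) = m2add m2one (m2smul e p)"
  obtains u where "E_vge v u 0" "z = eadd eone (escal e u)"
proof -
  obtain g11 g12 g21 g22 where g_def: "g = (g11, g12, g21, g22)"
    by (cases g) auto
  obtain p11 p12 p21 p22 where p_def: "p = (p11, p12, p21, p22)"
    by (cases p) auto
  obtain z1 z2 where z_def: "z = (z1, z2)"
    by (cases z)
  have integral: "vge v g11 0" "vge v g12 0" "vge v g21 0" "vge v g22 0"
    "vge v p11 0" "vge v p12 0" "vge v p21 0" "vge v p22 0"
    using g p by (auto simp: g_def p_def M2o_def)
  have row1: "1 + e * p11 = z1 * (1 + e * g11) + z2 * (e * g21)"
    "e * p12 = z1 * (e * g12) + z2 * (1 + e * g22)"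
    using eq by (auto simp: g_def p_def z_def tmat_def m2mult_def m2add_def m2one_def m2smul_def)
  define d where "d = m2det (m2add m2one (m2smul e g))"
  have d: "ounit v d"
    unfolding d_def using e(2) g by (rule ounit_det_one_plus_smul)
  have d_eq: "d = (1 + e * g11) * (1 + e * g22) - (e * g12) * (e * g21)"
    by (simp add: d_def g_def m2det_def m2add_def m2one_def m2smul_def)
  \<comment> \<open>Cramer's rule for the first row of \<open>t (1 + e g) = 1 + e p\<close>\<close>
  define u1 where "u1 = ((p11 - g11) * (1 + e * g22) - (p12 - g12) * (e * g21)) * inverse d"
  define u2 where "u2 = (p12 * (1 + e * g11) - (1 + e * p11) * g12) * inverse d"
  have "d * (z1 - 1) = e * ((p11 - g11) * (1 + e * g22) - (p12 - g12) * (e * g21))"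
    unfolding d_eq using row1 by algebra
  then have z1: "z1 = 1 + e * u1"
    using d unfolding u1_def ounit_def by (simp add: field_simps)
  have "d * z2 = e * (p12 * (1 + e * g11) - (1 + e * p11) * g12)"
    unfolding d_eq using row1 by algebra
  then have z2: "z2 = e * u2"
    using d unfolding u2_def ounit_def by (simp add: field_simps)
  have e0: "vge v e 0"
    using vge_mono[OF e(2)] by simp
  have "vge v u1 0" "vge v u2 0"
    unfolding u1_def u2_def using integral e0 vge_inverse_ounit[OF d]
    by (intro vge_mult_integral vge_diff vge_add vge_1; simp add: vge_mult_integral vge_add vge_1)+
  then show ?thesis
    using that[of "(u1, u2)"] z1 z2
    by (simp add: E_vge_def z_def eadd_def eone_def escal_def)
qed

lemma trace_walpha_torus_factor:
  assumes e: "e \<noteq> 0" and integral: "vge v \<alpha> 0" "E_vge v u 0" "g \<in> M2o v"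
    and eq: "m2mult (tmat \<alpha> (eadd eone (escal e u))) (m2add m2one (m2smul e g))
               = m2add m2one (m2smul e p)"
  obtains R where "vge v R 0"
    "m2trace (m2mult (walpha \<alpha>) p)
       = m2trace (m2mult (walpha \<alpha>) g) + eTr (emul \<alpha> esqrt u) + e * R"
proof -
  obtain g11 g12 g21 g22 where g_def: "g = (g11, g12, g21, g22)"
    by (cases g) auto
  obtain p11 p12 p21 p22 where p_def: "p = (p11, p12, p21, p22)"
    by (cases p) auto
  obtain u1 u2 where u_def: "u = (u1, u2)"
    by (cases u)
  have entries: "e * p12 = (1 + e * u1) * (e * g12) + e * u2 * (1 + e * g22)"
    "e * p21 = - \<alpha> * (e * u2) * (1 + e * g11) + (1 + e * u1) * (e * g21)"
    using eq by (auto simp: g_def p_def u_def tmat_def m2mult_def m2add_def m2one_def m2smul_def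
        eadd_def eone_def escal_def)
  define R where "R = u1 * g21 - \<alpha> * u1 * g12 - \<alpha> * u2 * (g11 + g22)"
  have "vge v R 0"
    unfolding R_def using integral
    by (intro vge_diff vge_mult_integral vge_add; simp add: g_def u_def M2o_def E_vge_def vge_mult_integral)
  moreover have "e * (p21 - \<alpha> * p12) = e * (g21 - \<alpha> * g12 - 2 * \<alpha> * u2 + e * R)"
    using entries unfolding R_def by algebra
  then have "p21 - \<alpha> * p12 = g21 - \<alpha> * g12 - 2 * \<alpha> * u2 + e * R"
    using e by simp
  ultimately show ?thesis
    using that by (simp add: g_def p_def u_def m2trace_def m2mult_def walpha_def eTr_def emul_def esqrt_def)
qed

lemma theta_one_if_is_a_theta:
  assumes "level0_add_char v \<psi>" "is_a_theta v \<alpha> \<psi> \<pi> n \<theta> a"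
  shows "\<theta> (1, 0) = 1"
proof -
  have "\<psi> (eTr (escal (inverse (\<pi> ^ n) * a) (emul \<alpha> esqrt (0, 0))))
      = \<theta> (eadd eone (escal (\<pi> ^ n) (0, 0)))"
    using assms(2) by (simp add: is_a_theta_def E_vge_def)
  moreover have "\<psi> 0 = 1"
    using assms(1) by (simp add: level0_add_char_def)
  ultimately show ?thesis
    by (simp add: eTr_def escal_def emul_def esqrt_def eadd_def eone_def)
qed

context
  fixes \<psi> :: "'a \<Rightarrow> complex" and \<pi> \<alpha> a :: 'a and n :: nat and \<theta> :: "'a \<times> 'a \<Rightarrow> complex"
  assumes \<psi>: "level0_add_char v \<psi>" and \<pi>: "\<pi> \<noteq> 0" "v \<pi> = 1" and n: "1 \<le> n"
    and \<alpha>: "vge v \<alpha> 0" and a: "is_a_theta v \<alpha> \<psi> \<pi> n \<theta> a"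
begin

lemma chiT_one_plus_smul:
  assumes p: "p \<in> M2o v"
  shows "chiT v \<alpha> \<psi> \<pi> n \<theta> a (m2add m2one (m2smul (\<pi> ^ n) p))
           = \<psi> (inverse (\<pi> ^ n) * a * m2trace (m2mult (walpha \<alpha>) p))"
proof -
  define e where "e = \<pi> ^ n"
  define \<chi> where "\<chi> g = \<psi> (inverse e * a * m2trace (m2mult (walpha \<alpha>) g))" for g
  have e: "e \<noteq> 0" "vge v e 1"
    using \<pi> n by (simp_all add: e_def vge_def valuation_power)
  have \<psi>_add: "\<And>x y. \<psi> (x + y) = \<psi> x * \<psi> y" and \<psi>_integral: "\<And>x. vge v x 0 \<Longrightarrow> \<psi> x = 1"
    using \<psi> by (auto simp: level0_add_char_def)
  have well_defined: "\<theta> z * \<chi> g = \<chi> p"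
    if g: "g \<in> M2o v"
      and eq: "m2mult (tmat \<alpha> z) (m2add m2one (m2smul e g)) = m2add m2one (m2smul e p)" for z g
  proof -
    obtain u where u: "E_vge v u 0" and z: "z = eadd eone (escal e u)"
      using torus_factor_near_one[OF e g p eq] .
    obtain R where R: "vge v R 0" and tr: "m2trace (m2mult (walpha \<alpha>) p)
        = m2trace (m2mult (walpha \<alpha>) g) + eTr (emul \<alpha> esqrt u) + e * R"
      using trace_walpha_torus_factor[OF e(1) \<alpha> u g eq[unfolded z]] .
    have "\<theta> z = \<psi> (eTr (escal (inverse e * a) (emul \<alpha> esqrt u)))"
      using a u unfolding is_a_theta_def z e_def by metis
    also have "\<dots> = \<psi> (inverse e * a * eTr (emul \<alpha> esqrt u))"
      by (cases "emul \<alpha> esqrt u") (simp add: eTr_def escal_def mult.left_commute)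
    finally have \<theta>z: "\<theta> z = \<psi> (inverse e * a * eTr (emul \<alpha> esqrt u))" .
    have "vge v (a * R) 0"
      using vge_mult_integral[of a 0 R] a R by (simp add: is_a_theta_def ounit_def vge_def)
    then have \<psi>aR: "\<psi> (a * R) = 1"
      by (rule \<psi>_integral)
    have "inverse e * a * m2trace (m2mult (walpha \<alpha>) p)
        = inverse e * a * m2trace (m2mult (walpha \<alpha>) g) + inverse e * a * eTr (emul \<alpha> esqrt u) + a * R"
      using tr e(1) by (simp add: field_simps)
    then show ?thesis
      unfolding \<chi>_def using \<theta>z \<psi>aR by (simp add: \<psi>_add)
  qed
  have identity: "m2mult (tmat \<alpha> (1, 0)) (m2add m2one (m2smul e p)) = m2add m2one (m2smul e p)"
    by (cases p) (simp add: tmat_def m2mult_def m2add_def m2one_def m2smul_def)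
  have \<theta>_one: "\<theta> (1, 0) = 1"
    using \<psi> a by (rule theta_one_if_is_a_theta)
  \<comment> \<open>\<open>chiT\<close> is defined by choice over all factorizations \<open>t (1 + \<pi>\<^sup>n g)\<close>; all of them give \<open>\<chi> p\<close>.\<close>
  have "chiT v \<alpha> \<psi> \<pi> n \<theta> a (m2add m2one (m2smul e p)) = \<chi> p"
    unfolding chiT_def e_def[symmetric] \<chi>_def[symmetric]
  proof (rule some_equality)
    show "\<exists>z g. z \<noteq> (0, 0) \<and> g \<in> M2o v \<and>
      m2add m2one (m2smul e p) = m2mult (tmat \<alpha> z) (m2add m2one (m2smul e g)) \<and> \<chi> p = \<theta> z * \<chi> g"
      using identity \<theta>_one p by (intro exI[of _ "(1, 0)"] exI[of _ p]) simp
  next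
    fix c
    assume "\<exists>z g. z \<noteq> (0, 0) \<and> g \<in> M2o v \<and>
      m2add m2one (m2smul e p) = m2mult (tmat \<alpha> z) (m2add m2one (m2smul e g)) \<and> c = \<theta> z * \<chi> g"
    then show "c = \<chi> p"
      using well_defined by metis
  qed
  then show ?thesis
    unfolding e_def \<chi>_def .
qed

lemma chiT_nmat:
  assumes "vge v x n"
  shows "chiT v \<alpha> \<psi> \<pi> n \<theta> a (nmat x) = \<psi> (inverse (\<pi> ^ (2 * n)) * (- a * \<alpha>) * x)"
proof -
  have "vge v (x * inverse (\<pi> ^ n)) 0"
    using assms \<pi> by (intro vge_mult_inverse) (simp_all add: valuation_power)
  then have "chiT v \<alpha> \<psi> \<pi> n \<theta> a (m2add m2one (m2smul (\<pi> ^ n) (0, x * inverse (\<pi> ^ n), 0, 0)))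
      = \<psi> (inverse (\<pi> ^ n) * a * m2trace (m2mult (walpha \<alpha>) (0, x * inverse (\<pi> ^ n), 0, 0)))"
    by (intro chiT_one_plus_smul) (simp add: M2o_def)
  moreover have "m2add m2one (m2smul (\<pi> ^ n) (0, x * inverse (\<pi> ^ n), 0, 0)) = nmat x"
    using \<pi> by (simp add: nmat_def m2add_def m2one_def m2smul_def)
  moreover have "inverse (\<pi> ^ (2 * n)) = inverse (\<pi> ^ n) * inverse (\<pi> ^ n)"
    by (simp add: mult_2 power_add)
  ultimately show ?thesis
    by (simp add: m2trace_def m2mult_def walpha_def algebra_simps)
qed

lemma chiT_amat:
  assumes "u \<in> Uset v n"
  shows "chiT v \<alpha> \<psi> \<pi> n \<theta> a (amat u) = 1"
proof -
  have "vge v ((u - 1) * inverse (\<pi> ^ n)) 0"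
    using assms \<pi> by (intro vge_mult_inverse) (simp_all add: Uset_def valuation_power)
  then have "chiT v \<alpha> \<psi> \<pi> n \<theta> a (m2add m2one (m2smul (\<pi> ^ n) ((u - 1) * inverse (\<pi> ^ n), 0, 0, 0)))
      = \<psi> (inverse (\<pi> ^ n) * a * m2trace (m2mult (walpha \<alpha>) ((u - 1) * inverse (\<pi> ^ n), 0, 0, 0)))"
    by (intro chiT_one_plus_smul) (simp add: M2o_def)
  moreover have "m2add m2one (m2smul (\<pi> ^ n) ((u - 1) * inverse (\<pi> ^ n), 0, 0, 0)) = amat u"
    using \<pi> by (simp add: amat_def m2add_def m2one_def m2smul_def field_simps)
  moreover have "\<psi> 0 = 1"
    using \<psi> by (simp add: level0_add_char_def)
  ultimately show ?thesis
    by (simp add: m2trace_def m2mult_def walpha_def)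
qed

end

lemma nmat_mem_Kn: "vge v x n \<Longrightarrow> nmat x \<in> Kn v n"
  by (simp add: Kn_def GL2o_def M2o_def nmat_def m2det_def ounit_def vge_1 vge_mono)

lemma amat_mem_Kn: "u \<in> Uset v n \<Longrightarrow> amat u \<in> Kn v n"
  by (auto simp: Kn_def GL2o_def M2o_def amat_def m2det_def Uset_def ounit_def vge_def)

lemma whittaker_support_near:
  assumes \<psi>: "level0_add_char v \<psi>"
    and left: "\<And>x g. W (m2mult (nmat x) g) = \<psi> x * W g"
    and right: "\<And>x. vge v x m \<Longrightarrow> W (m2mult (amat y) (nmat x)) = \<psi> (A * x) * W (amat y)"
    and nonzero: "W (amat y) \<noteq> 0"
  shows "vge v (y - A) (- m)"
proof (rule level0_add_char_annihilator[OF \<psi>])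
  fix x
  assume "vge v x m"
  have "\<psi> (y * x) * W (amat y) = \<psi> (A * x) * W (amat y)"
    using left[of "y * x" "amat y"] right[OF \<open>vge v x m\<close>] amat_mult_nmat by metis
  then have "\<psi> ((y - A) * x + A * x) = \<psi> (A * x)"
    using nonzero by (simp add: algebra_simps)
  then show "\<psi> ((y - A) * x) = 1"
    using \<psi> level0_add_char_nonzero[OF \<psi>, of "A * x"] by (simp add: level0_add_char_def)
qed

end

theorem proposition2p14:
  fixes v :: "'a::field_char_0 \<Rightarrow> int"
    and \<psi> :: "'a \<Rightarrow> complex"
    and \<pi> \<alpha> a :: 'a
    and n :: nat
    and \<theta> :: "'a \<times> 'a \<Rightarrow> complex"
    and V :: "('a m2 \<Rightarrow> complex) set"
    and W0 :: "'a m2 \<Rightarrow> complex"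
  assumes F: "nonarch_local_field_odd v"
    and unif: "\<pi> \<noteq> 0" "v \<pi> = 1"
    and psi: "level0_add_char v \<psi>"
    and alpha: "ounit v \<alpha>" "\<not> (\<exists>s. s * s = - \<alpha>)"
    and n: "1 \<le> n"
    and theta: "E_char v \<alpha> \<theta>" "E_conductor v \<theta> = 2 * n"
               "\<forall>x. x \<noteq> 0 \<longrightarrow> \<theta> (x, 0) = 1"
    and aT: "is_a_theta v \<alpha> \<psi> \<pi> n \<theta> a"
    and Wh: "whittaker_space \<psi> V"
    and sc: "supercuspidal v V"
    and cc: "trivial_central_char V"
    and cond: "rep_conductor v V = 4 * n"
    and ind: "rep_iso (cInd (ZKT v \<alpha> n) (chiT v \<alpha> \<psi> \<pi> n \<theta> a)) V"
    and W0: "W0 \<in> V" "W0 \<noteq> (\<lambda>_. 0)"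
            "\<forall>k\<in>ZKT v \<alpha> n. rtrans k W0 = (\<lambda>h. chiT v \<alpha> \<psi> \<pi> n \<theta> a k * W0 h)"
  shows "\<exists>c::complex. \<forall>y. y \<noteq> 0 \<longrightarrow>
           W0 (amat y) = (if y \<in> (\<lambda>u. inverse (\<pi> ^ (2 * n)) * (- a * \<alpha>) * u) ` Uset v n
                          then c else 0)"
proof -
  interpret nonarch_valuation v
    using F unfolding nonarch_local_field_odd_def by unfold_locales auto
  define A where "A = inverse (\<pi> ^ (2 * n)) * (- a * \<alpha>)"
  have \<alpha>_integral: "vge v \<alpha> 0"
    using alpha(1) by (simp add: ounit_def vge_def)
  have A: "A \<noteq> 0" "int n + v A = - int n"
    using unif alpha(1) aT
    by (auto simp: A_def is_a_theta_def ounit_def valuation_mult valuation_inverse valuation_power)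
  have eigen: "W0 (m2mult g k) = chiT v \<alpha> \<psi> \<pi> n \<theta> a k * W0 g" if "k \<in> Kn v n" for g k
    using W0(3) Kn_subset_ZKT that unfolding rtrans_def by (metis subsetD)
  have support: "y \<in> (\<lambda>u. A * u) ` Uset v n" if nonzero: "W0 (amat y) \<noteq> 0" for y
  proof -
    have "vge v (y - A) (- int n)"
    proof (rule whittaker_support_near[of \<psi> W0])
      show "W0 (m2mult (nmat x) g) = \<psi> x * W0 g" for x g
        using Wh W0(1) unfolding whittaker_space_def by blast
      show "W0 (m2mult (amat y) (nmat x)) = \<psi> (A * x) * W0 (amat y)" if "vge v x (int n)" for x
        using eigen[OF nmat_mem_Kn[OF that]] chiT_nmat[OF psi unif n \<alpha>_integral aT that]
        unfolding A_def by simp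
    qed (fact psi nonzero)+
    then show ?thesis
      using mem_scaled_Uset[OF A(1) n] A(2) by simp
  qed
  have invariant: "W0 (amat (y * u)) = W0 (amat y)" if "u \<in> Uset v n" for y u
    using eigen[OF amat_mem_Kn[OF that], of "amat y"] chiT_amat[OF psi unif n \<alpha>_integral aT that]
    by (simp add: amat_mult_amat)
  show ?thesis
    unfolding A_def[symmetric]
  proof (intro exI allI impI)
    fix y :: 'a
    show "W0 (amat y) = (if y \<in> (\<lambda>u. A * u) ` Uset v n then W0 (amat A) else 0)"
      using support invariant[of _ A] by auto
  qed
qed

end
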